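(* Let $\Lambda$ be a set and let $(\mathcal{X},\preceq)$ be a poset in which every nonempty chain has an infimum. If $(\mathcal{X},\preceq)$ is a complete partially ordered set, then the $\Lambda$-system algebra of monotone systems over $\mathcal{X}$ is composition-order invariant; and if $(\mathcal{X},\preceq)$ is an $\omega$-chain complete partially ordered set, then the $\Lambda$-system algebra of continuous systems over $\mathcal{X}$ is composition-order invariant.
   Context: A CPO is a poset in which every chain (including the empty one) has a supremum; an $\omega$-CPO is a poset with least element in which every $\omega$-chain (sequence $(x_n)_{n\in\mathbb{N}}$ with $x_i\preceq x_j$ for $i\le j$) has a supremum. $\mathcal{X}^{\mathcal{I}}$ (functions $\mathcal{I}\to\mathcal{X}$) is ordered componentwise. A function is $\omega$-continuous if it maps suprema of $\omega$-chains to suprema of the image. The $\Lambda$-system algebra of monotone (resp. continuous) systems over $\mathcal{X}$ has as systems all monotone (resp. $\omega$-continuous) functions $s:\mathcal{X}^{\mathcal{I}}\to\mathcal{X}^{\mathcal{O}}$ for finite disjoint $\mathcal{I},\mathcal{O}\subseteq\Lambda$, with $\lambda(s)=\mathcal{I}\cup\mathcal{O}$; $\Gamma(s)=\{\{i,o\}\mid i\in\mathcal{I},o\in\mathcal{O}\}$; parallel composition $(s_1\parallel s_2)(\mathbf{x})(o_j)=s_j(\mathbf{x}|_{\mathcal{I}_j})(o_j)$ for $s_j:\mathcal{X}^{\mathcal{I}_j}\to\mathcal{X}^{\mathcal{O}_j}$ with $\mathcal{I}_1,\mathcal{I}_2,\mathcal{O}_1,\mathcal{O}_2$ pairwise disjoint;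 and interface connection $\gamma_{i,o}(s)(\mathbf{x})=s(\mathbf{x}\cup\{(i,x^* )\})|_{\mathcal{O}\setminus\{o\}}$ for $\mathbf{x}\in\mathcal{X}^{\mathcal{I}\setminus\{i\}}$, where $x^*$ is the least $x_i\in\mathcal{X}$ with $s(\mathbf{x}\cup\{(i,x_i)\})(o)=x_i$. Composition-order invariance means: (i) for all $s$, $\{i,o\}\in\Gamma(s)$, $\{i',o'\}\in\Gamma(\gamma_{i,o}(s))$ we have $\{i',o'\}\in\Gamma(s)$, $\{i,o\}\in\Gamma(\gamma_{i',o'}(s))$ and $\gamma_{i',o'}(\gamma_{i,o}(s))=\gamma_{i,o}(\gamma_{i',o'}(s))$; (ii) $\parallel$ is associative and commutative; (iii) $\gamma_{i,o}(s_1)\parallel s_2=\gamma_{i,o}(s_1\parallel s_2)$ whenever $\lambda(s_1)\cap\lambda(s_2)=\emptyset$ and $\{i,o\}\in\Gamma(s_1)$. *)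

theory Defs
  imports Main
begin

(* Systems: (I, O, f) with I the input labels, O the output labels and
   f : X^I -> X^O.  Elements of X^I are partial maps with domain exactly I.
   To make HOL equality of systems coincide with equality of the underlying
   mathematical functions, f is required to return Map.empty on arguments
   whose domain is not I (canonical extension). *)

type_synonym ('l, 'x) sys = "'l set \<times> 'l set \<times> (('l \<rightharpoonup> 'x) \<Rightarrow> ('l \<rightharpoonup> 'x))"

definition ins :: "('l, 'x) sys \<Rightarrow> 'l set" where "ins s = fst s"
definition outs :: "('l, 'x) sys \<Rightarrow> 'l set" where "outs s = fst (snd s)"
definition fn :: "('l, 'x) sys \<Rightarrow> ('l \<rightharpoonup> 'x) \<Rightarrow> ('l \<rightharpoonup> 'x)" where "fn s = snd (snd s)"

definition is_sup :: "'x::order set \<Rightarrow> 'x \<Rightarrow> bool" where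
  "is_sup A a \<longleftrightarrow> (\<forall>y\<in>A. y \<le> a) \<and> (\<forall>b. (\<forall>y\<in>A. y \<le> b) \<longrightarrow> a \<le> b)"

definition is_inf :: "'x::order set \<Rightarrow> 'x \<Rightarrow> bool" where
  "is_inf A a \<longleftrightarrow> (\<forall>y\<in>A. a \<le> y) \<and> (\<forall>b. (\<forall>y\<in>A. b \<le> y) \<longrightarrow> b \<le> a)"

definition is_cpo :: "'x::order itself \<Rightarrow> bool" where
  "is_cpo _ \<longleftrightarrow> (\<forall>C::'x set. Complete_Partial_Order.chain (\<le>) C \<longrightarrow> (\<exists>a. is_sup C a))"

definition is_omega_cpo :: "'x::order itself \<Rightarrow> bool" where
  "is_omega_cpo _ \<longleftrightarrow> (\<exists>b::'x. \<forall>x. b \<le> x) \<and>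
     (\<forall>c::nat \<Rightarrow> 'x. (\<forall>i j. i \<le> j \<longrightarrow> c i \<le> c j) \<longrightarrow> (\<exists>a. is_sup (range c) a))"

definition nonempty_chains_have_inf :: "'x::order itself \<Rightarrow> bool" where
  "nonempty_chains_have_inf _ \<longleftrightarrow>
     (\<forall>C::'x set. C \<noteq> {} \<and> Complete_Partial_Order.chain (\<le>) C \<longrightarrow> (\<exists>a. is_inf C a))"

definition asg_le :: "('l \<rightharpoonup> 'x::order) \<Rightarrow> ('l \<rightharpoonup> 'x) \<Rightarrow> bool" where
  "asg_le x y \<longleftrightarrow> dom x = dom y \<and> (\<forall>l\<in>dom x. the (x l) \<le> the (y l))"

definition asg_sup :: "'l set \<Rightarrow> ('l \<rightharpoonup> 'x::order) set \<Rightarrow> ('l \<rightharpoonup> 'x) \<Rightarrow> bool" where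
  "asg_sup D A a \<longleftrightarrow> dom a = D \<and> (\<forall>y\<in>A. asg_le y a) \<and>
     (\<forall>b. dom b = D \<and> (\<forall>y\<in>A. asg_le y b) \<longrightarrow> asg_le a b)"

definition wf_sys :: "'l set \<Rightarrow> ('l, 'x) sys \<Rightarrow> bool" where
  "wf_sys \<Lambda> s \<longleftrightarrow> finite (ins s) \<and> finite (outs s) \<and> ins s \<subseteq> \<Lambda> \<and> outs s \<subseteq> \<Lambda> \<and>
     ins s \<inter> outs s = {} \<and>
     (\<forall>x. dom x = ins s \<longrightarrow> dom (fn s x) = outs s) \<and>
     (\<forall>x. dom x \<noteq> ins s \<longrightarrow> fn s x = Map.empty)"

definition mono_sys :: "'l set \<Rightarrow> ('l, 'x::order) sys set" where
  "mono_sys \<Lambda> = {s. wf_sys \<Lambda> s \<and>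
     (\<forall>x y. dom x = ins s \<and> dom y = ins s \<and> asg_le x y \<longrightarrow> asg_le (fn s x) (fn s y))}"

definition cont_sys :: "'l set \<Rightarrow> ('l, 'x::order) sys set" where
  "cont_sys \<Lambda> = {s. wf_sys \<Lambda> s \<and>
     (\<forall>(c::nat \<Rightarrow> 'l \<rightharpoonup> 'x) a. (\<forall>n. dom (c n) = ins s) \<and> (\<forall>m n. m \<le> n \<longrightarrow> asg_le (c m) (c n)) \<and>
            asg_sup (ins s) (range c) a
        \<longrightarrow> asg_sup (outs s) (fn s ` range c) (fn s a))}"

definition lam :: "('l, 'x) sys \<Rightarrow> 'l set" where
  "lam s = ins s \<union> outs s"

definition Gam :: "('l, 'x) sys \<Rightarrow> 'l set set" where
  "Gam s = {{i, o'} | i o'. i \<in> ins s \<and> o' \<in> outs s}"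

definition par :: "('l, 'x) sys \<Rightarrow> ('l, 'x) sys \<Rightarrow> ('l, 'x) sys" where
  "par s1 s2 = (ins s1 \<union> ins s2, outs s1 \<union> outs s2,
     \<lambda>x. if dom x = ins s1 \<union> ins s2
          then fn s1 (x |` ins s1) ++ fn s2 (x |` ins s2) else Map.empty)"

definition fixval :: "('l, 'x::order) sys \<Rightarrow> ('l \<rightharpoonup> 'x) \<Rightarrow> 'l \<Rightarrow> 'l \<Rightarrow> 'x" where
  "fixval s x i o' = (LEAST v. the (fn s (x(i \<mapsto> v)) o') = v)"

definition conn0 :: "('l, 'x::order) sys \<Rightarrow> 'l \<Rightarrow> 'l \<Rightarrow> ('l, 'x) sys" where
  "conn0 s i o' = (ins s - {i}, outs s - {o'},
     \<lambda>x. if dom x = ins s - {i}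
          then fn s (x(i \<mapsto> fixval s x i o')) |` (outs s - {o'}) else Map.empty)"

(* gamma_{i,o}: connection of the interface pair {i,o}; the pair is unordered,
   so whichever of the two labels is the input is used as the input *)
definition conn :: "('l, 'x::order) sys \<Rightarrow> 'l \<Rightarrow> 'l \<Rightarrow> ('l, 'x) sys" where
  "conn s i o' = (if i \<in> ins s \<and> o' \<in> outs s then conn0 s i o'
                  else if o' \<in> ins s \<and> i \<in> outs s then conn0 s o' i else s)"

definition comp_order_invariant :: "('l, 'x::order) sys set \<Rightarrow> bool" where
  "comp_order_invariant S \<longleftrightarrow>
     (\<forall>s\<in>S. \<forall>i o' i' o''. {i, o'} \<in> Gam s \<and> {i', o''} \<in> Gam (conn s i o') \<longrightarrow>
         {i', o''} \<in> Gam s \<and> {i, o'} \<in> Gam (conn s i' o'') \<and>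
         conn (conn s i o') i' o'' = conn (conn s i' o'') i o') \<and>
     (\<forall>s1\<in>S. \<forall>s2\<in>S. \<forall>s3\<in>S.
         lam s1 \<inter> lam s2 = {} \<and> lam s1 \<inter> lam s3 = {} \<and> lam s2 \<inter> lam s3 = {} \<longrightarrow>
         par (par s1 s2) s3 = par s1 (par s2 s3)) \<and>
     (\<forall>s1\<in>S. \<forall>s2\<in>S. lam s1 \<inter> lam s2 = {} \<longrightarrow> par s1 s2 = par s2 s1) \<and>
     (\<forall>s1\<in>S. \<forall>s2\<in>S. \<forall>i o'. lam s1 \<inter> lam s2 = {} \<and> {i, o'} \<in> Gam s1 \<longrightarrow>
         par (conn s1 i o') s2 = conn (par s1 s2) i o')"

end

theory Submission
  imports Defs "HOL-Library.Product_Order"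
begin

text \<open>Connecting an input \<open>a\<close> to an output \<open>\<alpha>\<close> feeds back the least fixed point of the
  \<open>\<alpha>\<close>-coordinate in the \<open>a\<close>-coordinate. Connecting two pairs \<open>(a, \<alpha>)\<close> and \<open>(b, \<beta>)\<close> one after
  the other therefore computes a nested least fixed point of the two-variable map
  \<open>F (u, w) = (s(\<dots>, a := u, b := w)(\<alpha>), s(\<dots>, a := u, b := w)(\<beta>))\<close>. By Bekic's lemma both
  nesting orders yield the simultaneous least fixed point of \<open>F\<close>, which exists in a CPO for
  monotone \<open>F\<close> and in an \<open>\<omega>\<close>-CPO for \<open>\<omega>\<close>-continuous \<open>F\<close> (Kleene iteration); products of
  (\<open>\<omega>\<close>-)CPOs are again (\<open>\<omega>\<close>-)CPOs. The remaining laws concern parallel composition of systems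
  with disjoint labels and are bookkeeping with partial maps.\<close>

definition is_lfp :: "('a::order \<Rightarrow> 'a) \<Rightarrow> 'a \<Rightarrow> bool" where
  "is_lfp g z \<longleftrightarrow> g z = z \<and> (\<forall>y. g y \<le> y \<longrightarrow> z \<le> y)"

lemma is_lfp_Least: "is_lfp g z \<Longrightarrow> (LEAST v. g v = v) = z"
  unfolding is_lfp_def by (intro Least_equality) auto

definition omega_continuous :: "('a::order \<Rightarrow> 'b::order) \<Rightarrow> bool" where
  "omega_continuous g \<longleftrightarrow>
     (\<forall>(c :: nat \<Rightarrow> _) a. mono c \<and> is_sup (range c) a \<longrightarrow> is_sup (range (g \<circ> c)) (g a))"

lemma omega_continuousD:
  fixes c :: "nat \<Rightarrow> 'a::order"
  shows "omega_continuous g \<Longrightarrow> mono c \<Longrightarrow> is_sup (range c) a \<Longrightarrow> is_sup (range (g \<circ> c)) (g a)"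
  unfolding omega_continuous_def by blast

lemma is_sup_unique: "is_sup A a \<Longrightarrow> is_sup A b \<Longrightarrow> a = b"
  unfolding is_sup_def by (meson order.antisym)

lemma is_sup_singleton: "is_sup {a} a"
  unfolding is_sup_def by simp

lemma is_sup_prod: "is_sup A p \<longleftrightarrow> is_sup (fst ` A) (fst p) \<and> is_sup (snd ` A) (snd p)"
proof
  assume p: "is_sup A p"
  then have ub: "\<forall>y\<in>A. fst y \<le> fst p \<and> snd y \<le> snd p"
    unfolding is_sup_def less_eq_prod_def by blast
  have "fst p \<le> b" if "\<forall>y\<in>fst ` A. y \<le> b" for b
  proof -
    have "\<forall>y\<in>A. y \<le> (b, snd p)" using that ub by (simp add: less_eq_prod_def)
    then show ?thesis using p unfolding is_sup_def less_eq_prod_def by fastforce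
  qed
  moreover have "snd p \<le> b" if "\<forall>y\<in>snd ` A. y \<le> b" for b
  proof -
    have "\<forall>y\<in>A. y \<le> (fst p, b)" using that ub by (simp add: less_eq_prod_def)
    then show ?thesis using p unfolding is_sup_def less_eq_prod_def by fastforce
  qed
  ultimately show "is_sup (fst ` A) (fst p) \<and> is_sup (snd ` A) (snd p)"
    using ub unfolding is_sup_def by blast
next
  assume "is_sup (fst ` A) (fst p) \<and> is_sup (snd ` A) (snd p)"
  then show "is_sup A p" unfolding is_sup_def less_eq_prod_def by blast
qed

lemma is_cpo_prod:
  assumes "is_cpo TYPE('a::order)" and "is_cpo TYPE('b::order)"
  shows "is_cpo TYPE('a \<times> 'b)"
  unfolding is_cpo_def
proof (intro allI impI)
  fix C :: "('a \<times> 'b) set" assume C: "Complete_Partial_Order.chain (\<le>) C"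
  have "Complete_Partial_Order.chain (\<le>) (fst ` C)" "Complete_Partial_Order.chain (\<le>) (snd ` C)"
    by (rule chain_imageI[OF C], simp add: less_eq_prod_def)+
  then obtain u w where "is_sup (fst ` C) u" "is_sup (snd ` C) w"
    using assms unfolding is_cpo_def by blast
  then have "is_sup C (u, w)" by (simp add: is_sup_prod)
  then show "\<exists>p. is_sup C p" ..
qed

lemma is_omega_cpo_prod:
  assumes "is_omega_cpo TYPE('a::order)" and "is_omega_cpo TYPE('b::order)"
  shows "is_omega_cpo TYPE('a \<times> 'b)"
  unfolding is_omega_cpo_def
proof (intro conjI allI impI)
  obtain b1 :: 'a and b2 :: 'b where "\<forall>x. b1 \<le> x" "\<forall>x. b2 \<le> x"
    using assms unfolding is_omega_cpo_def by blast
  then show "\<exists>b. \<forall>x::'a \<times> 'b. b \<le> x" by (auto simp: less_eq_prod_def)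
next
  fix c :: "nat \<Rightarrow> 'a \<times> 'b" assume "\<forall>i j. i \<le> j \<longrightarrow> c i \<le> c j"
  then have "\<forall>i j. i \<le> j \<longrightarrow> fst (c i) \<le> fst (c j)" "\<forall>i j. i \<le> j \<longrightarrow> snd (c i) \<le> snd (c j)"
    by (auto simp: less_eq_prod_def)
  then obtain u w where "is_sup (range (fst \<circ> c)) u" "is_sup (range (snd \<circ> c)) w"
    using assms unfolding is_omega_cpo_def by (metis comp_apply)
  then have "is_sup (range c) (u, w)" by (simp add: is_sup_prod image_comp)
  then show "\<exists>p. is_sup (range c) p" ..
qed

lemma cpo_has_lfp:
  fixes g :: "'a::order \<Rightarrow> 'a"
  assumes cpo: "is_cpo TYPE('a)" and "mono g"
  shows "\<exists>z. is_lfp g z"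
proof -
  define S where "S = (\<lambda>A::'a set. SOME a. is_sup A a)"
  have S: "Complete_Partial_Order.chain (\<le>) A \<Longrightarrow> is_sup A (S A)" for A
    using cpo unfolding is_cpo_def S_def by (metis someI_ex)
  interpret ccpo S "(\<le>)" "(<)"
    by unfold_locales (use S in \<open>auto simp: is_sup_def\<close>)
  have g: "monotone (\<le>) (\<le>) g" using \<open>mono g\<close> by (simp add: monotone_def mono_def)
  have "g (fixp g) = fixp g" using fixp_unfold[OF g] by simp
  moreover have "g y \<le> y \<Longrightarrow> fixp g \<le> y" for y by (rule fixp_lowerbound[OF g])
  ultimately show ?thesis unfolding is_lfp_def by blast
qed

lemma omega_cpo_has_lfp:
  fixes g :: "'a::order \<Rightarrow> 'a"
  assumes ocpo: "is_omega_cpo TYPE('a)" and "mono g" and "omega_continuous g"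
  shows "\<exists>z. is_lfp g z"
proof -
  obtain bot :: 'a where bot: "\<And>x. bot \<le> x" using ocpo unfolding is_omega_cpo_def by blast
  define c where "c n = (g ^^ n) bot" for n
  have c_Suc: "c (Suc n) = g (c n)" for n by (simp add: c_def)
  have "c n \<le> c (Suc n)" for n
  proof (induction n)
    case (Suc n)
    then show ?case using \<open>mono g\<close> by (simp add: c_Suc monoD)
  qed (simp add: c_def bot)
  then have "mono c" by (simp add: mono_iff_le_Suc)
  then obtain a where a: "is_sup (range c) a"
    using ocpo unfolding is_omega_cpo_def mono_def by blast
  have "is_sup (range (g \<circ> c)) (g a)"
    using \<open>omega_continuous g\<close> \<open>mono c\<close> a by (rule omega_continuousD)
  moreover have "is_sup (range (g \<circ> c)) a"
  proof -
    have "range (g \<circ> c) = range (\<lambda>n. c (Suc n))" by (simp add: c_Suc comp_def)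
    moreover have "c n \<le> b" if "\<forall>n. c (Suc n) \<le> b" for b n
      using that by (cases n) (simp_all add: c_def bot)
    ultimately show ?thesis using a unfolding is_sup_def by auto
  qed
  ultimately have "g a = a" by (rule is_sup_unique)
  moreover have "c n \<le> y" if "g y \<le> y" for y n
  proof (induction n)
    case (Suc n)
    then have "g (c n) \<le> g y" using \<open>mono g\<close> by (simp add: monoD)
    then show ?case using that by (simp add: c_Suc)
  qed (simp add: c_def bot)
  then have "g y \<le> y \<Longrightarrow> a \<le> y" for y using a unfolding is_sup_def by blast
  ultimately show ?thesis unfolding is_lfp_def by blast
qed

definition bekic_admissible :: "('a::order \<times> 'b::order \<Rightarrow> 'a \<times> 'b) \<Rightarrow> bool" where
  "bekic_admissible F \<longleftrightarrow> mono F \<and>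
     (\<forall>w. \<exists>u. is_lfp (\<lambda>u. fst (F (u, w))) u) \<and> (\<forall>u. \<exists>w. is_lfp (\<lambda>w. snd (F (u, w))) w) \<and>
     (\<exists>p. is_lfp F p)"

lemma bekic_admissible_lfp_fst:
  "bekic_admissible F \<Longrightarrow> is_lfp (\<lambda>u. fst (F (u, w))) (LEAST u. fst (F (u, w)) = u)"
  unfolding bekic_admissible_def using is_lfp_Least by metis

lemma bekic_admissible_lfp_snd:
  "bekic_admissible F \<Longrightarrow> is_lfp (\<lambda>w. snd (F (u, w))) (LEAST w. snd (F (u, w)) = w)"
  unfolding bekic_admissible_def using is_lfp_Least by metis

lemma is_lfp_prod_le:
  assumes "is_lfp F (u0, w0)" and "fst (F (u, w)) \<le> u" and "snd (F (u, w)) \<le> w"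
  shows "u0 \<le> u" and "w0 \<le> w"
proof -
  have "F (u, w) \<le> (u, w)" using assms(2,3) by (simp add: less_eq_prod_def)
  then have "(u0, w0) \<le> (u, w)" using assms(1) unfolding is_lfp_def by blast
  then show "u0 \<le> u" and "w0 \<le> w" by simp_all
qed

lemma bekic:
  fixes F :: "'a::order \<times> 'b::order \<Rightarrow> 'a \<times> 'b"
  assumes adm: "bekic_admissible F" and lfp: "is_lfp F (u0, w0)"
  defines "u_of \<equiv> \<lambda>w. LEAST u. fst (F (u, w)) = u" and "w_of \<equiv> \<lambda>u. LEAST w. snd (F (u, w)) = w"
  shows "u_of w0 = u0" and "w_of u0 = w0"
    and "(LEAST w. snd (F (u_of w, w)) = w) = w0" and "(LEAST u. fst (F (u, w_of u)) = u) = u0"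
proof -
  have u_of: "fst (F (u_of w, w)) = u_of w" "fst (F (u, w)) \<le> u \<Longrightarrow> u_of w \<le> u" for u w
    using bekic_admissible_lfp_fst[OF adm] unfolding u_of_def is_lfp_def by auto
  have w_of: "snd (F (u, w_of u)) = w_of u" "snd (F (u, w)) \<le> w \<Longrightarrow> w_of u \<le> w" for u w
    using bekic_admissible_lfp_snd[OF adm] unfolding w_of_def is_lfp_def by auto
  have fix0: "fst (F (u0, w0)) = u0" "snd (F (u0, w0)) = w0"
    using lfp unfolding is_lfp_def by auto
  have F_le: "fst (F p) \<le> fst (F q)" "snd (F p) \<le> snd (F q)" if "p \<le> q" for p q
    using adm monoD[of F p q] that unfolding bekic_admissible_def by (simp_all add: less_eq_prod_def)
  show u_of_w0: "u_of w0 = u0"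
  proof (rule order.antisym)
    show "u_of w0 \<le> u0" using u_of(2) fix0(1) by simp
    then have "snd (F (u_of w0, w0)) \<le> w0" using F_le(2)[of "(u_of w0, w0)" "(u0, w0)"] fix0(2) by simp
    then show "u0 \<le> u_of w0" by (rule is_lfp_prod_le(1)[OF lfp, rotated]) (simp add: u_of(1))
  qed
  show w_of_u0: "w_of u0 = w0"
  proof (rule order.antisym)
    show "w_of u0 \<le> w0" using w_of(2) fix0(2) by simp
    then have "fst (F (u0, w_of u0)) \<le> u0" using F_le(1)[of "(u0, w_of u0)" "(u0, w0)"] fix0(1) by simp
    then show "w0 \<le> w_of u0" by (rule is_lfp_prod_le(2)[OF lfp]) (simp add: w_of(1))
  qed
  show "(LEAST w. snd (F (u_of w, w)) = w) = w0"
  proof (rule Least_equality)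
    fix w assume "snd (F (u_of w, w)) = w"
    then show "w0 \<le> w" by (intro is_lfp_prod_le(2)[OF lfp, of "u_of w"]) (simp_all add: u_of(1))
  qed (simp add: u_of_w0 fix0)
  show "(LEAST u. fst (F (u, w_of u)) = u) = u0"
  proof (rule Least_equality)
    fix u assume "fst (F (u, w_of u)) = u"
    then show "u0 \<le> u" by (intro is_lfp_prod_le(1)[OF lfp, of _ "w_of u"]) (simp_all add: w_of(1))
  qed (simp add: w_of_u0 fix0)
qed

lemma mono_partial_maps:
  fixes F :: "'a::order \<times> 'b::order \<Rightarrow> 'a \<times> 'b"
  assumes "mono F"
  shows "mono (\<lambda>u. fst (F (u, w)))" and "mono (\<lambda>w. snd (F (u, w)))"
  using monoD[OF assms] by (auto intro!: monoI simp: less_eq_prod_def)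

lemma omega_continuous_partial_maps:
  fixes F :: "'a::order \<times> 'b::order \<Rightarrow> 'a \<times> 'b"
  assumes "omega_continuous F"
  shows "omega_continuous (\<lambda>u. fst (F (u, w)))" and "omega_continuous (\<lambda>w. snd (F (u, w)))"
proof -
  note F = omega_continuousD[OF assms]
  show "omega_continuous (\<lambda>u. fst (F (u, w)))" unfolding omega_continuous_def
  proof (intro allI impI, elim conjE)
    fix c :: "nat \<Rightarrow> 'a" and a assume "mono c" "is_sup (range c) a"
    then have "mono (\<lambda>n. (c n, w))" "is_sup (range (\<lambda>n. (c n, w))) (a, w)"
      by (simp_all add: mono_def less_eq_prod_def is_sup_prod image_image is_sup_singleton)
    then have "is_sup (range (F \<circ> (\<lambda>n. (c n, w)))) (F (a, w))" by (rule F)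
    then have "is_sup (fst ` range (F \<circ> (\<lambda>n. (c n, w)))) (fst (F (a, w)))"
      using is_sup_prod by blast
    then show "is_sup (range ((\<lambda>u. fst (F (u, w))) \<circ> c)) (fst (F (a, w)))"
      by (simp add: image_image comp_def)
  qed
  show "omega_continuous (\<lambda>w. snd (F (u, w)))" unfolding omega_continuous_def
  proof (intro allI impI, elim conjE)
    fix c :: "nat \<Rightarrow> 'b" and a assume "mono c" "is_sup (range c) a"
    then have "mono (\<lambda>n. (u, c n))" "is_sup (range (\<lambda>n. (u, c n))) (u, a)"
      by (simp_all add: mono_def less_eq_prod_def is_sup_prod image_image is_sup_singleton)
    then have "is_sup (range (F \<circ> (\<lambda>n. (u, c n)))) (F (u, a))" by (rule F)
    then have "is_sup (snd ` range (F \<circ> (\<lambda>n. (u, c n)))) (snd (F (u, a)))"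
      using is_sup_prod by blast
    then show "is_sup (range ((\<lambda>w. snd (F (u, w))) \<circ> c)) (snd (F (u, a)))"
      by (simp add: image_image comp_def)
  qed
qed

lemma bekic_admissible_if_cpo:
  fixes F :: "'a::order \<times> 'b::order \<Rightarrow> 'a \<times> 'b"
  assumes "is_cpo TYPE('a)" and "is_cpo TYPE('b)" and "mono F"
  shows "bekic_admissible F"
  unfolding bekic_admissible_def
proof (intro conjI allI)
  show "\<exists>u. is_lfp (\<lambda>u. fst (F (u, w))) u" for w
    using cpo_has_lfp[OF assms(1) mono_partial_maps(1)[OF assms(3)]] .
  show "\<exists>w. is_lfp (\<lambda>w. snd (F (u, w))) w" for u
    using cpo_has_lfp[OF assms(2) mono_partial_maps(2)[OF assms(3)]] .
  show "\<exists>p. is_lfp F p"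
    using cpo_has_lfp[OF is_cpo_prod[OF assms(1,2)] assms(3)] .
qed (rule assms(3))

lemma bekic_admissible_if_omega_cpo:
  fixes F :: "'a::order \<times> 'b::order \<Rightarrow> 'a \<times> 'b"
  assumes "is_omega_cpo TYPE('a)" and "is_omega_cpo TYPE('b)" and "mono F" and "omega_continuous F"
  shows "bekic_admissible F"
  unfolding bekic_admissible_def
proof (intro conjI allI)
  show "\<exists>u. is_lfp (\<lambda>u. fst (F (u, w))) u" for w
    using omega_cpo_has_lfp[OF assms(1) mono_partial_maps(1)[OF assms(3)]
        omega_continuous_partial_maps(1)[OF assms(4)]] .
  show "\<exists>w. is_lfp (\<lambda>w. snd (F (u, w))) w" for u
    using omega_cpo_has_lfp[OF assms(2) mono_partial_maps(2)[OF assms(3)]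
        omega_continuous_partial_maps(2)[OF assms(4)]] .
  show "\<exists>p. is_lfp F p"
    using omega_cpo_has_lfp[OF is_omega_cpo_prod[OF assms(1,2)] assms(3,4)] .
qed (rule assms(3))

lemma sys_eqI: "ins s = ins t \<Longrightarrow> outs s = outs t \<Longrightarrow> fn s = fn t \<Longrightarrow> s = t"
  unfolding ins_def outs_def fn_def by (simp add: prod_eq_iff)

lemma ins_conn0 [simp]: "ins (conn0 s i o') = ins s - {i}"
  and outs_conn0 [simp]: "outs (conn0 s i o') = outs s - {o'}"
  and fn_conn0: "fn (conn0 s i o') x = (if dom x = ins s - {i}
          then fn s (x(i \<mapsto> fixval s x i o')) |` (outs s - {o'}) else Map.empty)"
  unfolding conn0_def ins_def outs_def fn_def by auto

lemma ins_par [simp]: "ins (par s t) = ins s \<union> ins t"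
  and outs_par [simp]: "outs (par s t) = outs s \<union> outs t"
  and fn_par: "fn (par s t) x = (if dom x = ins s \<union> ins t
          then fn s (x |` ins s) ++ fn t (x |` ins t) else Map.empty)"
  unfolding par_def ins_def outs_def fn_def by auto

lemma wf_sys_dom_fn: "wf_sys \<Lambda> s \<Longrightarrow> dom x = ins s \<Longrightarrow> dom (fn s x) = outs s"
  unfolding wf_sys_def by auto

lemma wf_sys_ins_outs_disjoint: "wf_sys \<Lambda> s \<Longrightarrow> ins s \<inter> outs s = {}"
  unfolding wf_sys_def by auto

definition loop_map :: "('l, 'x::order) sys \<Rightarrow> ('l \<rightharpoonup> 'x) \<Rightarrow> 'l \<Rightarrow> 'l \<Rightarrow> 'l \<Rightarrow> 'l \<Rightarrow> 'x \<times> 'x \<Rightarrow> 'x \<times> 'x"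
  where "loop_map s x a \<alpha> b \<beta> p =
    (the (fn s (x(a \<mapsto> fst p, b \<mapsto> snd p)) \<alpha>), the (fn s (x(a \<mapsto> fst p, b \<mapsto> snd p)) \<beta>))"

lemma fn_conn0_conn0:
  assumes ab: "a \<in> ins s" "b \<in> ins s" "a \<noteq> b" and \<alpha>\<beta>: "\<beta> \<in> outs s" "\<alpha> \<noteq> \<beta>"
    and dx: "dom x = ins s - {a} - {b}"
  defines "F \<equiv> loop_map s x a \<alpha> b \<beta>"
  defines "u_of \<equiv> \<lambda>w. LEAST u. fst (F (u, w)) = u"
  defines "w0 \<equiv> LEAST w. snd (F (u_of w, w)) = w"
  shows "fn (conn0 (conn0 s a \<alpha>) b \<beta>) x = fn s (x(a \<mapsto> u_of w0, b \<mapsto> w0)) |` (outs s - {\<alpha>} - {\<beta>})"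
proof -
  have twist: "x(b \<mapsto> w, a \<mapsto> u) = x(a \<mapsto> u, b \<mapsto> w)" for u w
    using ab by (simp add: fun_upd_twist)
  have dom_b: "dom (x(b \<mapsto> w)) = ins s - {a}" for w
    using dx ab by auto
  have fixval_a: "fixval s (x(b \<mapsto> w)) a \<alpha> = u_of w" for w
    unfolding fixval_def u_of_def F_def loop_map_def by (simp add: twist)
  have inner: "fn (conn0 s a \<alpha>) (x(b \<mapsto> w)) = fn s (x(a \<mapsto> u_of w, b \<mapsto> w)) |` (outs s - {\<alpha>})" for w
    using dom_b by (simp add: fn_conn0 fixval_a twist)
  have "fixval (conn0 s a \<alpha>) x b \<beta> = w0"
    unfolding fixval_def w0_def F_def loop_map_def using \<alpha>\<beta> by (simp add: inner)
  then have "fn (conn0 (conn0 s a \<alpha>) b \<beta>) x = fn (conn0 s a \<alpha>) (x(b \<mapsto> w0)) |` (outs s - {\<alpha>} - {\<beta>})"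
    using dx by (simp only: fn_conn0[of "conn0 s a \<alpha>"] ins_conn0 outs_conn0 if_True simp_thms)
  then show ?thesis by (simp add: inner Int_absorb1 Diff_subset)
qed

lemma loop_map_swap:
  assumes "a \<noteq> b"
  shows "loop_map s x b \<beta> a \<alpha> (w, u) = prod.swap (loop_map s x a \<alpha> b \<beta> (u, w))"
  using assms by (simp add: loop_map_def fun_upd_twist)

lemma conn0_commute:
  fixes s :: "('l, 'x::order) sys"
  assumes ab: "a \<in> ins s" "b \<in> ins s" "a \<noteq> b" and \<alpha>\<beta>: "\<alpha> \<in> outs s" "\<beta> \<in> outs s" "\<alpha> \<noteq> \<beta>"
    and adm: "\<And>x. dom x = ins s - {a} - {b} \<Longrightarrow> bekic_admissible (loop_map s x a \<alpha> b \<beta>)"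
  shows "conn0 (conn0 s a \<alpha>) b \<beta> = conn0 (conn0 s b \<beta>) a \<alpha>"
proof (rule sys_eqI)
  show "fn (conn0 (conn0 s a \<alpha>) b \<beta>) = fn (conn0 (conn0 s b \<beta>) a \<alpha>)"
  proof
    fix x :: "'l \<rightharpoonup> 'x"
    have swap_Diff: "ins s - {b} - {a} = ins s - {a} - {b}" by blast
    show "fn (conn0 (conn0 s a \<alpha>) b \<beta>) x = fn (conn0 (conn0 s b \<beta>) a \<alpha>) x"
    proof (cases "dom x = ins s - {a} - {b}")
      case True
      define F where "F = loop_map s x a \<alpha> b \<beta>"
      have "bekic_admissible F" unfolding F_def using adm[OF True] .
      then obtain u0 w0 where lfp: "is_lfp F (u0, w0)"
        unfolding bekic_admissible_def by auto
      note bek = bekic[OF \<open>bekic_admissible F\<close> lfp]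
      have "fn (conn0 (conn0 s a \<alpha>) b \<beta>) x = fn s (x(a \<mapsto> u0, b \<mapsto> w0)) |` (outs s - {\<alpha>} - {\<beta>})"
        using fn_conn0_conn0[OF ab \<alpha>\<beta>(2,3) True] bek(1,3) unfolding F_def by simp
      moreover have "fn (conn0 (conn0 s b \<beta>) a \<alpha>) x = fn s (x(b \<mapsto> w0, a \<mapsto> u0)) |` (outs s - {\<beta>} - {\<alpha>})"
        using fn_conn0_conn0[OF ab(2,1) ab(3)[symmetric] \<alpha>\<beta>(1) \<alpha>\<beta>(3)[symmetric]] True swap_Diff
          bek(2,4) unfolding F_def by (simp add: loop_map_swap[OF ab(3)])
      moreover have "outs s - {\<beta>} - {\<alpha>} = outs s - {\<alpha>} - {\<beta>}" by blast
      moreover have "x(b \<mapsto> w0, a \<mapsto> u0) = x(a \<mapsto> u0, b \<mapsto> w0)"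
        using ab(3) by (simp add: fun_upd_twist)
      ultimately show ?thesis by simp
    next
      case False
      then show ?thesis by (simp add: fn_conn0 swap_Diff)
    qed
  qed
qed auto

lemma conn_eq_conn0:
  assumes "ins s \<inter> outs s = {}" and "a \<in> ins s" and "\<alpha> \<in> outs s" and "{i, o'} = {a, \<alpha>}"
  shows "conn s i o' = conn0 s a \<alpha>"
proof -
  have "(i = a \<and> o' = \<alpha>) \<or> (i = \<alpha> \<and> o' = a)"
    using assms by (auto simp: doubleton_eq_iff)
  then show ?thesis
    using assms by (auto simp: conn_def)
qed

lemma GamE:
  assumes "{i, o'} \<in> Gam s"
  obtains a \<alpha> where "a \<in> ins s" "\<alpha> \<in> outs s" "{i, o'} = {a, \<alpha>}"
  using assms unfolding Gam_def by auto

lemma GamI: "a \<in> ins s \<Longrightarrow> \<alpha> \<in> outs s \<Longrightarrow> {a, \<alpha>} \<in> Gam s"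
  unfolding Gam_def by auto

lemma conn_commute:
  fixes s :: "('l, 'x::order) sys"
  assumes wf: "wf_sys \<Lambda> s"
    and commute: "\<And>a b \<alpha> \<beta>. a \<in> ins s \<Longrightarrow> b \<in> ins s \<Longrightarrow> a \<noteq> b \<Longrightarrow>
        \<alpha> \<in> outs s \<Longrightarrow> \<beta> \<in> outs s \<Longrightarrow> \<alpha> \<noteq> \<beta> \<Longrightarrow>
        conn0 (conn0 s a \<alpha>) b \<beta> = conn0 (conn0 s b \<beta>) a \<alpha>"
    and g1: "{i, o'} \<in> Gam s" and g2: "{i', o''} \<in> Gam (conn s i o')"
  shows "{i', o''} \<in> Gam s \<and> {i, o'} \<in> Gam (conn s i' o'') \<and>
         conn (conn s i o') i' o'' = conn (conn s i' o'') i o'"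
proof -
  have disj: "ins s \<inter> outs s = {}" using wf by (rule wf_sys_ins_outs_disjoint)
  obtain a \<alpha> where a\<alpha>: "a \<in> ins s" "\<alpha> \<in> outs s" "{i, o'} = {a, \<alpha>}"
    using g1 by (rule GamE)
  have conn_a: "conn s i o' = conn0 s a \<alpha>" using conn_eq_conn0[OF disj a\<alpha>] .
  obtain b \<beta> where b\<beta>: "b \<in> ins s - {a}" "\<beta> \<in> outs s - {\<alpha>}" "{i', o''} = {b, \<beta>}"
    using g2 unfolding conn_a by (rule GamE) auto
  have conn_b: "conn s i' o'' = conn0 s b \<beta>"
    using conn_eq_conn0[OF disj _ _ b\<beta>(3)] b\<beta> by auto
  have "conn (conn0 s a \<alpha>) i' o'' = conn0 (conn0 s a \<alpha>) b \<beta>"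
    using disj b\<beta> by (intro conn_eq_conn0) auto
  moreover have "conn (conn0 s b \<beta>) i o' = conn0 (conn0 s b \<beta>) a \<alpha>"
    using disj a\<alpha> b\<beta> by (intro conn_eq_conn0) auto
  moreover have "conn0 (conn0 s a \<alpha>) b \<beta> = conn0 (conn0 s b \<beta>) a \<alpha>"
    using a\<alpha> b\<beta> by (intro commute) auto
  moreover have "{i', o''} \<in> Gam s" "{i, o'} \<in> Gam (conn s i' o'')"
    using a\<alpha> b\<beta> conn_b by (auto intro: GamI)
  ultimately show ?thesis using conn_a conn_b by simp
qed

lemma par_comm:
  assumes wf1: "wf_sys \<Lambda> s1" and wf2: "wf_sys \<Lambda> s2" and disj: "lam s1 \<inter> lam s2 = {}"
  shows "par s1 s2 = par s2 s1"
proof (rule sys_eqI)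
  show "fn (par s1 s2) = fn (par s2 s1)"
  proof
    fix x
    show "fn (par s1 s2) x = fn (par s2 s1) x"
    proof (cases "dom x = ins s1 \<union> ins s2")
      case True
      have "dom (fn s1 (x |` ins s1)) = outs s1" using wf_sys_dom_fn[OF wf1] True by auto
      moreover have "dom (fn s2 (x |` ins s2)) = outs s2" using wf_sys_dom_fn[OF wf2] True by auto
      ultimately have "fn s1 (x |` ins s1) ++ fn s2 (x |` ins s2) = fn s2 (x |` ins s2) ++ fn s1 (x |` ins s1)"
        using disj by (intro map_add_comm) (auto simp: lam_def)
      then show ?thesis using True by (simp add: fn_par Un_commute)
    next
      case False
      then show ?thesis by (simp add: fn_par Un_commute)
    qed
  qed
qed auto

lemma par_assoc: "par (par s1 s2) s3 = par s1 (par s2 s3)"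
proof (rule sys_eqI)
  show "fn (par (par s1 s2) s3) = fn (par s1 (par s2 s3))"
  proof
    fix x
    show "fn (par (par s1 s2) s3) x = fn (par s1 (par s2 s3)) x"
    proof (cases "dom x = ins s1 \<union> ins s2 \<union> ins s3")
      case True
      have "dom (x |` (ins s1 \<union> ins s2)) = ins s1 \<union> ins s2" "dom (x |` (ins s2 \<union> ins s3)) = ins s2 \<union> ins s3"
        using True by auto
      then show ?thesis using True by (simp add: fn_par Un_assoc Int_absorb1)
    next
      case False
      then show ?thesis by (simp add: fn_par Un_assoc)
    qed
  qed
qed (auto simp: Un_assoc)

lemma restrict_map_add_remove:
  assumes "dom f = A" and "dom g = B" and "\<alpha> \<notin> B"
  shows "(f ++ g) |` (A \<union> B - {\<alpha>}) = f |` (A - {\<alpha>}) ++ g"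
proof
  fix l
  show "((f ++ g) |` (A \<union> B - {\<alpha>})) l = (f |` (A - {\<alpha>}) ++ g) l"
  proof (cases "l \<in> B")
    case True
    then have "l \<in> A \<union> B - {\<alpha>}" "l \<in> dom g" using assms by auto
    then show ?thesis by (simp add: map_add_dom_app_simps)
  next
    case False
    then show ?thesis using assms by (cases "l \<in> A - {\<alpha>}") (auto simp: map_add_dom_app_simps)
  qed
qed

lemma fn_par_upd:
  assumes "dom x = ins s1 \<union> ins s2 - {a}" and "a \<in> ins s1" and "a \<notin> ins s2"
  shows "fn (par s1 s2) (x(a \<mapsto> v)) = fn s1 ((x |` (ins s1 - {a}))(a \<mapsto> v)) ++ fn s2 (x |` ins s2)"
proof -
  have "dom (x(a \<mapsto> v)) = ins s1 \<union> ins s2" using assms by auto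
  then show ?thesis using assms by (simp add: fn_par)
qed

lemma par_conn0:
  fixes s1 :: "('l, 'x::order) sys"
  assumes wf1: "wf_sys \<Lambda> s1" and wf2: "wf_sys \<Lambda> s2" and disj: "lam s1 \<inter> lam s2 = {}"
    and a: "a \<in> ins s1" and \<alpha>: "\<alpha> \<in> outs s1"
  shows "par (conn0 s1 a \<alpha>) s2 = conn0 (par s1 s2) a \<alpha>"
proof (rule sys_eqI)
  have a2: "a \<notin> ins s2" "\<alpha> \<notin> outs s2" using disj a \<alpha> by (auto simp: lam_def)
  have ins_eq: "ins s1 - {a} \<union> ins s2 = ins s1 \<union> ins s2 - {a}" using a2 by auto
  show "fn (par (conn0 s1 a \<alpha>) s2) = fn (conn0 (par s1 s2) a \<alpha>)"
  proof
    fix x :: "'l \<rightharpoonup> 'x"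
    show "fn (par (conn0 s1 a \<alpha>) s2) x = fn (conn0 (par s1 s2) a \<alpha>) x"
    proof (cases "dom x = ins s1 \<union> ins s2 - {a}")
      case True
      define x1 where "x1 = x |` (ins s1 - {a})"
      define y2 where "y2 = fn s2 (x |` ins s2)"
      have dom_x1: "dom x1 = ins s1 - {a}" using True by (auto simp: x1_def)
      have dom_y2: "dom y2 = outs s2" unfolding y2_def using True a2 by (intro wf_sys_dom_fn[OF wf2]) auto
      have upd: "fn (par s1 s2) (x(a \<mapsto> v)) = fn s1 (x1(a \<mapsto> v)) ++ y2" for v
        unfolding x1_def y2_def using fn_par_upd[OF True a a2(1)] .
      have "y2 \<alpha> = None" using dom_y2 a2 by auto
      then have fixval_eq: "fixval (par s1 s2) x a \<alpha> = fixval s1 x1 a \<alpha>"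
        unfolding fixval_def upd by (simp add: map_add_def)
      define y1 where "y1 = fn s1 (x1(a \<mapsto> fixval s1 x1 a \<alpha>))"
      have dom_y1: "dom y1 = outs s1"
        unfolding y1_def using dom_x1 a by (intro wf_sys_dom_fn[OF wf1]) auto
      have "fn (par (conn0 s1 a \<alpha>) s2) x = fn (conn0 s1 a \<alpha>) x1 ++ y2"
        using True ins_eq unfolding x1_def y2_def by (simp add: fn_par)
      also have "\<dots> = y1 |` (outs s1 - {\<alpha>}) ++ y2"
        using dom_x1 unfolding y1_def by (simp add: fn_conn0)
      also have "\<dots> = (y1 ++ y2) |` (outs s1 \<union> outs s2 - {\<alpha>})"
        using restrict_map_add_remove[OF dom_y1 dom_y2 a2(2)] by simp
      also have "\<dots> = fn (conn0 (par s1 s2) a \<alpha>) x"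
        using True unfolding y1_def by (simp add: fn_conn0 upd fixval_eq)
      finally show ?thesis .
    next
      case False
      then show ?thesis by (simp add: fn_par fn_conn0 ins_eq)
    qed
  qed
qed (use a \<alpha> disj in \<open>auto simp: lam_def\<close>)

lemma par_conn:
  fixes s1 :: "('l, 'x::order) sys"
  assumes wf1: "wf_sys \<Lambda> s1" and wf2: "wf_sys \<Lambda> s2" and disj: "lam s1 \<inter> lam s2 = {}"
    and "{i, o'} \<in> Gam s1"
  shows "par (conn s1 i o') s2 = conn (par s1 s2) i o'"
proof -
  obtain a \<alpha> where a\<alpha>: "a \<in> ins s1" "\<alpha> \<in> outs s1" "{i, o'} = {a, \<alpha>}"
    using \<open>{i, o'} \<in> Gam s1\<close> by (rule GamE)
  have disj1: "ins s1 \<inter> outs s1 = {}" using wf1 by (rule wf_sys_ins_outs_disjoint)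
  have "ins (par s1 s2) \<inter> outs (par s1 s2) = {}"
    using disj1 wf_sys_ins_outs_disjoint[OF wf2] disj unfolding lam_def by auto
  then have "conn (par s1 s2) i o' = conn0 (par s1 s2) a \<alpha>"
    using a\<alpha> by (intro conn_eq_conn0) auto
  moreover have "conn s1 i o' = conn0 s1 a \<alpha>" using conn_eq_conn0[OF disj1 a\<alpha>] .
  ultimately show ?thesis using par_conn0[OF wf1 wf2 disj a\<alpha>(1,2)] by simp
qed

lemma comp_order_invariantI:
  fixes S :: "('l, 'x::order) sys set"
  assumes wf: "\<And>s. s \<in> S \<Longrightarrow> wf_sys \<Lambda> s"
    and commute: "\<And>s a b \<alpha> \<beta>. s \<in> S \<Longrightarrow> a \<in> ins s \<Longrightarrow> b \<in> ins s \<Longrightarrow> a \<noteq> b \<Longrightarrow>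
        \<alpha> \<in> outs s \<Longrightarrow> \<beta> \<in> outs s \<Longrightarrow> \<alpha> \<noteq> \<beta> \<Longrightarrow>
        conn0 (conn0 s a \<alpha>) b \<beta> = conn0 (conn0 s b \<beta>) a \<alpha>"
  shows "comp_order_invariant S"
  unfolding comp_order_invariant_def
proof (intro conjI ballI allI impI)
  fix s i o' i' o'' assume s: "s \<in> S" and g: "{i, o'} \<in> Gam s \<and> {i', o''} \<in> Gam (conn s i o')"
  note commutes = conn_commute[OF wf[OF s] commute[OF s] conjunct1[OF g] conjunct2[OF g]]
  then show "{i', o''} \<in> Gam s" "{i, o'} \<in> Gam (conn s i' o'')"
    "conn (conn s i o') i' o'' = conn (conn s i' o'') i o'" by simp_all
next
  fix s1 s2 s3 :: "('l, 'x) sys"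
  show "par (par s1 s2) s3 = par s1 (par s2 s3)" by (rule par_assoc)
next
  fix s1 s2 assume "s1 \<in> S" "s2 \<in> S" "lam s1 \<inter> lam s2 = {}"
  then show "par s1 s2 = par s2 s1" by (intro par_comm[OF wf wf])
next
  fix s1 s2 i o' assume "s1 \<in> S" "s2 \<in> S" "lam s1 \<inter> lam s2 = {} \<and> {i, o'} \<in> Gam s1"
  then show "par (conn s1 i o') s2 = conn (par s1 s2) i o'" by (intro par_conn[OF wf wf]) auto
qed

lemma asg_le_refl: "asg_le x x"
  unfolding asg_le_def by simp

lemma asg_supI:
  assumes dom_c: "\<forall>n. dom (c n) = D" and dom_m: "dom m = D"
    and sup: "\<forall>l\<in>D. is_sup (range (\<lambda>n. the (c n l))) (the (m l))"
  shows "asg_sup D (range c) m"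
proof -
  have ub: "asg_le (c n) m" for n
    using dom_c dom_m sup unfolding asg_le_def is_sup_def by auto
  have least: "asg_le m b" if "dom b = D" "\<forall>n. asg_le (c n) b" for b
    unfolding asg_le_def
  proof (intro conjI ballI)
    show "dom m = dom b" using dom_m that(1) by simp
    fix l assume "l \<in> dom m"
    moreover have "\<forall>n. the (c n l) \<le> the (b l)" using that dom_c dom_m \<open>l \<in> dom m\<close>
      unfolding asg_le_def by auto
    ultimately show "the (m l) \<le> the (b l)" using sup dom_m unfolding is_sup_def by auto
  qed
  show ?thesis unfolding asg_sup_def using dom_m ub least by auto
qed

lemma asg_sup_component:
  assumes sup: "asg_sup D A m" and l: "l \<in> D" and dom_A: "\<forall>y\<in>A. dom y = D"
  shows "is_sup ((\<lambda>y. the (y l)) ` A) (the (m l))"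
proof -
  have dom_m: "dom m = D" and ub: "\<forall>y\<in>A. asg_le y m"
    and least: "\<And>b. dom b = D \<Longrightarrow> \<forall>y\<in>A. asg_le y b \<Longrightarrow> asg_le m b"
    using sup unfolding asg_sup_def by blast+
  have "the (m l) \<le> b" if b: "\<forall>v\<in>(\<lambda>y. the (y l)) ` A. v \<le> b" for b
  proof -
    \<comment> \<open>raise only the \<open>l\<close>-component of the supremum to \<open>b\<close>\<close>
    have "asg_le y (m(l \<mapsto> b))" if "y \<in> A" for y
      unfolding asg_le_def
    proof (intro conjI ballI)
      show "dom y = dom (m(l \<mapsto> b))" using that dom_A dom_m l by auto
      fix l' assume "l' \<in> dom y"
      then show "the (y l') \<le> the ((m(l \<mapsto> b)) l')"
        using that ub b unfolding asg_le_def by (cases "l' = l") auto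
    qed
    moreover have "dom (m(l \<mapsto> b)) = D" using dom_m l by auto
    ultimately have "asg_le m (m(l \<mapsto> b))" using least by blast
    then have "the (m l) \<le> the ((m(l \<mapsto> b)) l)" using dom_m l unfolding asg_le_def by blast
    then show ?thesis by simp
  qed
  moreover have "v \<le> the (m l)" if "v \<in> (\<lambda>y. the (y l)) ` A" for v
    using that ub dom_A l unfolding asg_le_def by blast
  ultimately show ?thesis unfolding is_sup_def by blast
qed

lemma cont_sysD:
  fixes s :: "('l, 'x::order) sys" and c :: "nat \<Rightarrow> 'l \<rightharpoonup> 'x"
  assumes "s \<in> cont_sys \<Lambda>" and "\<forall>n. dom (c n) = ins s" and "\<forall>m n. m \<le> n \<longrightarrow> asg_le (c m) (c n)"
    and "asg_sup (ins s) (range c) a"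
  shows "asg_sup (outs s) (fn s ` range c) (fn s a)"
proof -
  have "\<forall>(c :: nat \<Rightarrow> 'l \<rightharpoonup> 'x) a. (\<forall>n. dom (c n) = ins s) \<and> (\<forall>m n. m \<le> n \<longrightarrow> asg_le (c m) (c n)) \<and>
      asg_sup (ins s) (range c) a \<longrightarrow> asg_sup (outs s) (fn s ` range c) (fn s a)"
    using assms(1) unfolding cont_sys_def by simp
  then show ?thesis using assms(2-4) by blast
qed

lemma cont_sys_component_sup:
  fixes s :: "('l, 'x::order) sys" and M :: "nat \<Rightarrow> 'l \<rightharpoonup> 'x"
  assumes s: "s \<in> cont_sys \<Lambda>" and "\<forall>n. dom (M n) = ins s" and "\<forall>m n. m \<le> n \<longrightarrow> asg_le (M m) (M n)"
    and "asg_sup (ins s) (range M) P" and "\<gamma> \<in> outs s"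
  shows "is_sup (range (\<lambda>n. the (fn s (M n) \<gamma>))) (the (fn s P \<gamma>))"
proof -
  have wf: "wf_sys \<Lambda> s" using s unfolding cont_sys_def by blast
  have "asg_sup (outs s) (fn s ` range M) (fn s P)"
    using cont_sysD[OF s assms(2-4)] .
  moreover have "\<forall>y\<in>fn s ` range M. dom y = outs s"
    using assms wf_sys_dom_fn[OF wf] by auto
  ultimately have "is_sup ((\<lambda>y. the (y \<gamma>)) ` fn s ` range M) (the (fn s P \<gamma>))"
    by (rule asg_sup_component[OF _ \<open>\<gamma> \<in> outs s\<close>])
  then show ?thesis by (simp add: image_image)
qed

lemma cont_sys_subset_mono_sys: "cont_sys \<Lambda> \<subseteq> mono_sys \<Lambda>"
proof
  fix s assume s: "s \<in> cont_sys \<Lambda>"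
  have "asg_le (fn s x) (fn s y)" if xy: "dom x = ins s" "dom y = ins s" "asg_le x y" for x y
  proof -
    \<comment> \<open>the chain \<open>x, y, y, \<dots>\<close> has supremum \<open>y\<close>\<close>
    define c where "c n = (if n = 0 then x else y)" for n :: nat
    have range_c: "range c = {x, y}"
    proof
      show "range c \<subseteq> {x, y}" by (auto simp: c_def)
      have "c 0 = x" "c 1 = y" by (simp_all add: c_def)
      then show "{x, y} \<subseteq> range c" by (metis empty_subsetI insert_subset rangeI)
    qed
    have "\<forall>n. dom (c n) = ins s" using xy by (simp add: c_def)
    moreover have "\<forall>m n. m \<le> n \<longrightarrow> asg_le (c m) (c n)"
      using xy(3) by (simp add: c_def asg_le_refl)
    moreover have "asg_sup (ins s) (range c) y"
      using xy asg_le_refl unfolding range_c asg_sup_def by auto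
    ultimately have "asg_sup (outs s) (fn s ` range c) (fn s y)" by (rule cont_sysD[OF s])
    then show ?thesis unfolding range_c asg_sup_def by simp
  qed
  then show "s \<in> mono_sys \<Lambda>" using s unfolding cont_sys_def mono_sys_def by blast
qed

lemma loop_map_mono:
  fixes s :: "('l, 'x::order) sys"
  assumes s: "s \<in> mono_sys \<Lambda>" and dx: "dom x = ins s - {a} - {b}"
    and ab: "a \<in> ins s" "b \<in> ins s" and \<alpha>\<beta>: "\<alpha> \<in> outs s" "\<beta> \<in> outs s"
  shows "mono (loop_map s x a \<alpha> b \<beta>)"
proof (rule monoI)
  fix p q :: "'x \<times> 'x" assume "p \<le> q"
  define xp where "xp = x(a \<mapsto> fst p, b \<mapsto> snd p)"
  define xq where "xq = x(a \<mapsto> fst q, b \<mapsto> snd q)"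
  have dom: "dom xp = ins s" "dom xq = ins s" using dx ab by (auto simp: xp_def xq_def)
  have "asg_le xp xq"
    using \<open>p \<le> q\<close> dom unfolding asg_le_def xp_def xq_def less_eq_prod_def by auto
  then have "asg_le (fn s xp) (fn s xq)" using s dom unfolding mono_sys_def by blast
  moreover have "dom (fn s xp) = outs s"
    using s dom by (intro wf_sys_dom_fn[of \<Lambda>]) (auto simp: mono_sys_def)
  ultimately show "loop_map s x a \<alpha> b \<beta> p \<le> loop_map s x a \<alpha> b \<beta> q"
    using \<alpha>\<beta> unfolding loop_map_def xp_def[symmetric] xq_def[symmetric] asg_le_def less_eq_prod_def
    by simp
qed

lemma loop_map_omega_continuous:
  fixes s :: "('l, 'x::order) sys"
  assumes s: "s \<in> cont_sys \<Lambda>" and dx: "dom x = ins s - {a} - {b}"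
    and ab: "a \<in> ins s" "b \<in> ins s" and \<alpha>\<beta>: "\<alpha> \<in> outs s" "\<beta> \<in> outs s"
  shows "omega_continuous (loop_map s x a \<alpha> b \<beta>)"
  unfolding omega_continuous_def
proof (intro allI impI, elim conjE)
  fix c :: "nat \<Rightarrow> 'x \<times> 'x" and p assume "mono c" and sup_c: "is_sup (range c) p"
  define M where "M n = x(a \<mapsto> fst (c n), b \<mapsto> snd (c n))" for n
  define P where "P = x(a \<mapsto> fst p, b \<mapsto> snd p)"
  have dom_M: "\<forall>n. dom (M n) = ins s" using dx ab by (auto simp: M_def)
  have "\<forall>m n. m \<le> n \<longrightarrow> asg_le (M m) (M n)"
    using \<open>mono c\<close> dom_M unfolding mono_def asg_le_def M_def less_eq_prod_def by auto
  moreover have "asg_sup (ins s) (range M) P"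
  proof (rule asg_supI[OF dom_M])
    show "dom P = ins s" using dx ab by (auto simp: P_def)
    have "is_sup (range (\<lambda>n. fst (c n))) (fst p)" "is_sup (range (\<lambda>n. snd (c n))) (snd p)"
      using sup_c unfolding is_sup_prod[of "range c" p] by (simp_all add: image_image)
    then show "\<forall>l\<in>ins s. is_sup (range (\<lambda>n. the (M n l))) (the (P l))"
      by (auto simp: M_def P_def is_sup_singleton)
  qed
  ultimately have "is_sup (range (\<lambda>n. the (fn s (M n) \<gamma>))) (the (fn s P \<gamma>))" if "\<gamma> \<in> outs s" for \<gamma>
    using cont_sys_component_sup[OF s dom_M] that by blast
  then show "is_sup (range (loop_map s x a \<alpha> b \<beta> \<circ> c)) (loop_map s x a \<alpha> b \<beta> p)"
    using \<alpha>\<beta> unfolding is_sup_prod[of "range (loop_map s x a \<alpha> b \<beta> \<circ> c)"]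
    by (simp add: image_image loop_map_def M_def P_def)
qed

lemma mono_sys_conn0_commute:
  fixes s :: "('l, 'x::order) sys"
  assumes "is_cpo TYPE('x)" and s: "s \<in> mono_sys \<Lambda>"
    and ab: "a \<in> ins s" "b \<in> ins s" "a \<noteq> b" and \<alpha>\<beta>: "\<alpha> \<in> outs s" "\<beta> \<in> outs s" "\<alpha> \<noteq> \<beta>"
  shows "conn0 (conn0 s a \<alpha>) b \<beta> = conn0 (conn0 s b \<beta>) a \<alpha>"
proof (rule conn0_commute[OF ab \<alpha>\<beta>])
  fix x :: "'l \<rightharpoonup> 'x" assume "dom x = ins s - {a} - {b}"
  then have "mono (loop_map s x a \<alpha> b \<beta>)" using s ab \<alpha>\<beta> by (intro loop_map_mono)
  then show "bekic_admissible (loop_map s x a \<alpha> b \<beta>)"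
    using bekic_admissible_if_cpo \<open>is_cpo TYPE('x)\<close> by blast
qed

lemma cont_sys_conn0_commute:
  fixes s :: "('l, 'x::order) sys"
  assumes "is_omega_cpo TYPE('x)" and s: "s \<in> cont_sys \<Lambda>"
    and ab: "a \<in> ins s" "b \<in> ins s" "a \<noteq> b" and \<alpha>\<beta>: "\<alpha> \<in> outs s" "\<beta> \<in> outs s" "\<alpha> \<noteq> \<beta>"
  shows "conn0 (conn0 s a \<alpha>) b \<beta> = conn0 (conn0 s b \<beta>) a \<alpha>"
proof (rule conn0_commute[OF ab \<alpha>\<beta>])
  fix x :: "'l \<rightharpoonup> 'x" assume dx: "dom x = ins s - {a} - {b}"
  have "s \<in> mono_sys \<Lambda>" using s cont_sys_subset_mono_sys by blast
  then have "mono (loop_map s x a \<alpha> b \<beta>)" using dx ab \<alpha>\<beta> by (intro loop_map_mono)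
  moreover have "omega_continuous (loop_map s x a \<alpha> b \<beta>)"
    using s dx ab \<alpha>\<beta> by (intro loop_map_omega_continuous)
  ultimately show "bekic_admissible (loop_map s x a \<alpha> b \<beta>)"
    using bekic_admissible_if_omega_cpo \<open>is_omega_cpo TYPE('x)\<close> by blast
qed

theorem theorem5p8:
  fixes \<Lambda> :: "'l set"
  assumes "nonempty_chains_have_inf TYPE('x::order)"
  shows "(is_cpo TYPE('x) \<longrightarrow> comp_order_invariant (mono_sys \<Lambda> :: ('l, 'x) sys set)) \<and>
         (is_omega_cpo TYPE('x) \<longrightarrow> comp_order_invariant (cont_sys \<Lambda> :: ('l, 'x) sys set))"
proof (intro conjI impI)
  assume "is_cpo TYPE('x)"
  then show "comp_order_invariant (mono_sys \<Lambda> :: ('l, 'x) sys set)"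
    by (intro comp_order_invariantI mono_sys_conn0_commute) (auto simp: mono_sys_def)
next
  assume "is_omega_cpo TYPE('x)"
  then show "comp_order_invariant (cont_sys \<Lambda> :: ('l, 'x) sys set)"
    by (intro comp_order_invariantI cont_sys_conn0_commute) (auto simp: cont_sys_def)
qed

end
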